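(* There is a universal constant $c>0$ such that the following holds. Let $n>3$, $\sigma>0$, $U>0$, $C_n>0$ with $\min\{U,C_n\}>2\pi\sigma$. Then $$\inf_{x_{1:n}} \sup_{\theta_{1:n}\in \mathrm{TV}(C_n),\ |\theta_1|\le U} \mathbb{E}\left[\sum_{t=1}^n \big(x_t(y_{1:t-1}) - \theta_t\big)^2 \right] \geq c\big(U^2 + C_n^2 + \sigma^2\log n + n^{1/3} C_n^{2/3}\sigma^{4/3}\big),$$ where the infimum is over all forecasters, i.e. all sequences of (measurable) functions $x_t$ of $y_1,\dots,y_{t-1}$, and $y_t=\theta_t+Z_t$ with $Z_1,\dots,Z_n$ i.i.d. $\mathcal N(0,\sigma^2)$.
   Context: $\mathrm{TV}(C_n)=\{\theta_{1:n}\in\mathbb{R}^n:\sum_{i=2}^n|\theta_i-\theta_{i-1}|\le C_n\}$. Logarithms are natural. In the online forecasting problem, $x_t$ may depend only on the past noisy observations $y_1,\dots,y_{t-1}$ ($x_1$ is a constant). *)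

theory Defs
  imports "HOL-Probability.Probability"
begin

text \<open>Sequences are indexed 1..n; values outside are irrelevant.\<close>

definition TV_class :: "nat \<Rightarrow> real \<Rightarrow> (nat \<Rightarrow> real) set" where
  "TV_class n C = {\<theta>. (\<Sum>i=2..n. \<bar>\<theta> i - \<theta> (i - 1)\<bar>) \<le> C}"

definition gauss_noise :: "nat \<Rightarrow> real \<Rightarrow> (nat \<Rightarrow> real) measure" where
  "gauss_noise n \<sigma> = PiM {1..n} (\<lambda>_. density lborel (normal_density 0 \<sigma>))"

definition forecaster :: "nat \<Rightarrow> (nat \<Rightarrow> (nat \<Rightarrow> real) \<Rightarrow> real) \<Rightarrow> bool" where
  "forecaster n x \<longleftrightarrow> (\<forall>t\<in>{1..n}. x t \<in> borel_measurable (PiM {1..<t} (\<lambda>_. borel)))"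

definition risk :: "nat \<Rightarrow> real \<Rightarrow> (nat \<Rightarrow> (nat \<Rightarrow> real) \<Rightarrow> real) \<Rightarrow> (nat \<Rightarrow> real) \<Rightarrow> ennreal" where
  "risk n \<sigma> x \<theta> = (\<integral>\<^sup>+ z. ennreal (\<Sum>t=1..n.
      (x t (restrict (\<lambda>i. \<theta> i + z i) {1..<t}) - \<theta> t)\<^sup>2) \<partial>gauss_noise n \<sigma>)"

end

(*
  By Fubini the risk splits over t into squared errors of x_t, each an integral
  against the Gaussian likelihood of (theta_1, ..., theta_(t-1)). For two parameters theta, theta'
  the two errors at time t add up to at least (3/16) (theta_t - theta'_t)^2 A^2, where A is the
  affinity (Bhattacharyya coefficient) of the two likelihoods: Le Cam's two-point method.
  Parameters differing only at t = 1 give the U^2 term, a jump of size C at t = 2 gives C^2.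
  For the rate n^(1/3) C^(2/3) sigma^(4/3) apply Assouad's method to signals +-d that are constant
  on blocks of length L: d^2 L <= sigma^2 keeps the affinity of a block flip bounded below, and
  2 d n / L <= C keeps the signal in TV(C); the best choice is L ~ (sigma n / C)^(2/3). The
  sigma^2 log n term is dominated by this rate because sigma <= C.
*)
theory Submission
  imports Defs
begin

section \<open>Translated Gaussian noise\<close>

lemma distr_density_lborel_plus:
  fixes f :: "real \<Rightarrow> ennreal"
  assumes [measurable]: "f \<in> borel_measurable borel"
  shows "distr (density lborel f) borel ((+) a) = density lborel (\<lambda>x. f (x - a))"
proof (rule measure_eqI)
  fix A :: "real set" assume "A \<in> sets (distr (density lborel f) borel ((+) a))"
  then have [measurable]: "A \<in> sets borel" by simp
  have "emeasure (distr (density lborel f) borel ((+) a)) A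
      = (\<integral>\<^sup>+ y. f ((a + y) - a) * indicator A (a + y) \<partial>lborel)"
    using measurable_sets[of "(+) a" borel borel A]
    by (simp add: emeasure_distr emeasure_density) (auto intro!: nn_integral_cong split: split_indicator)
  also have "\<dots> = (\<integral>\<^sup>+ x. f (x - a) * indicator A x \<partial>distr lborel borel ((+) a))"
    by (subst nn_integral_distr) auto
  also have "\<dots> = emeasure (density lborel (\<lambda>x. f (x - a))) A"
    by (simp add: lborel_distr_plus emeasure_density)
  finally show "emeasure (distr (density lborel f) borel ((+) a)) A
      = emeasure (density lborel (\<lambda>x. f (x - a))) A" .
qed simp

lemma distr_PiM_density_lborel_shift:
  fixes f :: "real \<Rightarrow> ennreal" and \<theta> :: "'i \<Rightarrow> real"
  assumes J: "finite J" and [measurable]: "f \<in> borel_measurable borel"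
    and prob: "prob_space (density lborel f)"
  shows "distr (PiM J (\<lambda>_. density lborel f)) (PiM J (\<lambda>_. borel)) (\<lambda>z. restrict (\<lambda>i. \<theta> i + z i) J)
       = PiM J (\<lambda>i. density lborel (\<lambda>x. f (x - \<theta> i)))"
proof -
  have shifted: "distr (density lborel f) borel ((+) c) = density lborel (\<lambda>x. f (x - c))" for c
    by (rule distr_density_lborel_plus) simp
  interpret Z: product_prob_space "\<lambda>_::'i. density lborel f"
    using prob by (rule product_prob_spaceI)
  interpret T: product_prob_space "\<lambda>i. density lborel (\<lambda>x. f (x - \<theta> i))"
    using prob by (intro product_prob_spaceI) (simp flip: shifted add: prob_space.prob_space_distr)
  show ?thesis
  proof (rule T.PiM_eqI[OF J])
    show "sets (distr (PiM J (\<lambda>_. density lborel f)) (PiM J (\<lambda>_. borel)) (\<lambda>z. restrict (\<lambda>i. \<theta> i + z i) J))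
        = sets (PiM J (\<lambda>i. density lborel (\<lambda>x. f (x - \<theta> i))))"
      by (simp cong: sets_PiM_cong)
    fix A assume "\<And>i. i \<in> J \<Longrightarrow> A i \<in> sets (density lborel (\<lambda>x. f (x - \<theta> i)))"
    then have [measurable]: "A i \<in> sets borel" if "i \<in> J" for i
      using that by simp
    have preimage: "(\<lambda>z. restrict (\<lambda>i. \<theta> i + z i) J) -` Pi\<^sub>E J A \<inter> space (PiM J (\<lambda>_. density lborel f))
        = Pi\<^sub>E J (\<lambda>i. (+) (\<theta> i) -` A i)"
      by (auto simp: space_PiM PiE_def Pi_def extensional_def)
    have "emeasure (distr (PiM J (\<lambda>_. density lborel f)) (PiM J (\<lambda>_. borel))
           (\<lambda>z. restrict (\<lambda>i. \<theta> i + z i) J)) (Pi\<^sub>E J A)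
        = emeasure (PiM J (\<lambda>_. density lborel f)) (Pi\<^sub>E J (\<lambda>i. (+) (\<theta> i) -` A i))"
      by (subst emeasure_distr) (auto intro!: measurable_restrict sets_PiM_I_finite J simp: preimage)
    also have "\<dots> = (\<Prod>i\<in>J. emeasure (density lborel f) ((+) (\<theta> i) -` A i))"
      using measurable_sets[of "(+) (\<theta> _)" borel borel] by (subst Z.emeasure_PiM[OF J]) auto
    also have "\<dots> = (\<Prod>i\<in>J. emeasure (density lborel (\<lambda>x. f (x - \<theta> i))) (A i))"
      by (intro prod.cong refl) (simp flip: shifted add: emeasure_distr)
    finally show "emeasure (distr (PiM J (\<lambda>_. density lborel f)) (PiM J (\<lambda>_. borel))
           (\<lambda>z. restrict (\<lambda>i. \<theta> i + z i) J)) (Pi\<^sub>E J A)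
        = (\<Prod>i\<in>J. emeasure (density lborel (\<lambda>x. f (x - \<theta> i))) (A i))" .
  qed
qed

lemma indicator_PiE_eq_prod:
  assumes "x \<in> extensional J" "finite J"
  shows "(indicator (Pi\<^sub>E J A) x :: ennreal) = (\<Prod>i\<in>J. indicator (A i) (x i))"
proof (cases "x \<in> Pi\<^sub>E J A")
  case False
  then obtain i where "i \<in> J" "x i \<notin> A i" using assms(1) by (auto simp: PiE_def Pi_def)
  then show ?thesis using False assms(2) by (auto simp: indicator_def intro!: prod_zero)
qed (auto simp: PiE_def Pi_def)

lemma PiM_density_lborel:
  fixes f :: "'i \<Rightarrow> real \<Rightarrow> ennreal"
  assumes J: "finite J" and [measurable]: "\<And>i. f i \<in> borel_measurable borel"
    and prob: "\<And>i. prob_space (density lborel (f i))"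
  shows "PiM J (\<lambda>i. density lborel (f i)) = density (PiM J (\<lambda>_. lborel)) (\<lambda>w. \<Prod>i\<in>J. f i (w i))"
proof -
  interpret F: product_prob_space "\<lambda>i. density lborel (f i)"
    using prob by (rule product_prob_spaceI)
  interpret L: product_sigma_finite "\<lambda>_. lborel"
    by unfold_locales
  show ?thesis
  proof (rule F.PiM_eqI[OF J, symmetric])
    show "sets (density (PiM J (\<lambda>_. lborel)) (\<lambda>w. \<Prod>i\<in>J. f i (w i)))
        = sets (PiM J (\<lambda>i. density lborel (f i)))"
      by (simp cong: sets_PiM_cong)
    fix A assume "\<And>i. i \<in> J \<Longrightarrow> A i \<in> sets (density lborel (f i))"
    then have [measurable]: "A i \<in> sets borel" if "i \<in> J" for i
      using that by simp
    have "emeasure (density (PiM J (\<lambda>_. lborel)) (\<lambda>w. \<Prod>i\<in>J. f i (w i))) (Pi\<^sub>E J A)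
        = (\<integral>\<^sup>+ w. (\<Prod>i\<in>J. f i (w i)) * indicator (Pi\<^sub>E J A) w \<partial>PiM J (\<lambda>_. lborel))"
      by (subst emeasure_density) (auto intro!: sets_PiM_I_finite J)
    also have "\<dots> = (\<integral>\<^sup>+ w. (\<Prod>i\<in>J. f i (w i) * indicator (A i) (w i)) \<partial>PiM J (\<lambda>_. lborel))"
      by (intro nn_integral_cong) (simp add: indicator_PiE_eq_prod[OF _ J] space_PiM PiE_iff prod.distrib)
    also have "\<dots> = (\<Prod>i\<in>J. (\<integral>\<^sup>+ y. f i y * indicator (A i) y \<partial>lborel))"
      by (subst L.product_nn_integral_prod[OF J]) auto
    also have "\<dots> = (\<Prod>i\<in>J. emeasure (density lborel (f i)) (A i))"
      by (intro prod.cong refl) (simp add: emeasure_density)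
    finally show "emeasure (density (PiM J (\<lambda>_. lborel)) (\<lambda>w. \<Prod>i\<in>J. f i (w i))) (Pi\<^sub>E J A)
        = (\<Prod>i\<in>J. emeasure (density lborel (f i)) (A i))" .
  qed
qed

lemma nn_integral_PiM_density_lborel_shift:
  fixes f :: "real \<Rightarrow> ennreal" and \<theta> :: "'i \<Rightarrow> real"
  assumes J: "finite J" and [measurable]: "f \<in> borel_measurable borel"
    and prob: "prob_space (density lborel f)"
    and [measurable]: "g \<in> borel_measurable (PiM J (\<lambda>_. borel))"
  shows "(\<integral>\<^sup>+ z. g (restrict (\<lambda>i. \<theta> i + z i) J) \<partial>PiM J (\<lambda>_. density lborel f))
       = (\<integral>\<^sup>+ w. (\<Prod>i\<in>J. f (w i - \<theta> i)) * g w \<partial>PiM J (\<lambda>_. lborel))"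
proof -
  have prob_shifted: "prob_space (density lborel (\<lambda>x. f (x - c)))" for c
    using prob_space.prob_space_distr[OF prob, of "(+) c" borel]
    by (simp add: distr_density_lborel_plus)
  have "(\<integral>\<^sup>+ z. g (restrict (\<lambda>i. \<theta> i + z i) J) \<partial>PiM J (\<lambda>_. density lborel f))
      = (\<integral>\<^sup>+ w. g w \<partial>distr (PiM J (\<lambda>_. density lborel f)) (PiM J (\<lambda>_. borel))
           (\<lambda>z. restrict (\<lambda>i. \<theta> i + z i) J))"
    by (subst nn_integral_distr) (auto intro!: measurable_restrict)
  also have "\<dots> = (\<integral>\<^sup>+ w. g w \<partial>density (PiM J (\<lambda>_. lborel)) (\<lambda>w. \<Prod>i\<in>J. f (w i - \<theta> i)))"
    by (simp add: distr_PiM_density_lborel_shift[OF J _ prob] PiM_density_lborel[OF J _ prob_shifted])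
  also have "\<dots> = (\<integral>\<^sup>+ w. (\<Prod>i\<in>J. f (w i - \<theta> i)) * g w \<partial>PiM J (\<lambda>_. lborel))"
  proof -
    have "g \<in> borel_measurable (PiM J (\<lambda>_. lborel))"
      by (subst measurable_cong_sets[OF sets_PiM_cong refl]) (auto simp: sets_lborel)
    then show ?thesis by (subst nn_integral_density) auto
  qed
  finally show ?thesis .
qed

definition gauss_lik :: "real \<Rightarrow> 'i set \<Rightarrow> ('i \<Rightarrow> real) \<Rightarrow> ('i \<Rightarrow> real) \<Rightarrow> real" where
  "gauss_lik \<sigma> J \<theta> w = (\<Prod>i\<in>J. normal_density (\<theta> i) \<sigma> (w i))"

lemma gauss_lik_nonneg: "0 \<le> gauss_lik \<sigma> J \<theta> w"
  unfolding gauss_lik_def by (intro prod_nonneg) auto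

lemma gauss_lik_measurable[measurable]: "gauss_lik \<sigma> J \<theta> \<in> borel_measurable (PiM J (\<lambda>_. lborel))"
  unfolding gauss_lik_def by measurable

definition gauss_sq_risk ::
    "real \<Rightarrow> 'i set \<Rightarrow> ('i \<Rightarrow> real) \<Rightarrow> (('i \<Rightarrow> real) \<Rightarrow> real) \<Rightarrow> real \<Rightarrow> ennreal" where
  "gauss_sq_risk \<sigma> J \<theta> f a = (\<integral>\<^sup>+ w. ennreal (gauss_lik \<sigma> J \<theta> w * (f w - a)\<^sup>2) \<partial>PiM J (\<lambda>_. lborel))"

lemma nn_integral_gauss_noise_shift:
  fixes \<theta> :: "'i \<Rightarrow> real"
  assumes \<sigma>: "\<sigma> > 0" and J: "finite J" and g: "g \<in> borel_measurable (PiM J (\<lambda>_. borel))"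
  shows "(\<integral>\<^sup>+ z. g (restrict (\<lambda>i. \<theta> i + z i) J) \<partial>PiM J (\<lambda>_. density lborel (normal_density 0 \<sigma>)))
       = (\<integral>\<^sup>+ w. ennreal (gauss_lik \<sigma> J \<theta> w) * g w \<partial>PiM J (\<lambda>_. lborel))"
proof -
  have "normal_density 0 \<sigma> (y - c) = normal_density c \<sigma> y" for y c
    by (simp add: normal_density_def)
  then show ?thesis
    using nn_integral_PiM_density_lborel_shift[OF J _ prob_space_normal_density[OF \<sigma>] g]
    by (simp add: gauss_lik_def prod_ennreal)
qed

lemma nn_integral_gauss_noise_marginal:
  fixes \<theta> :: "nat \<Rightarrow> real"
  assumes \<sigma>: "\<sigma> > 0" and J: "J \<subseteq> {1..n}" and g[measurable]: "g \<in> borel_measurable (PiM J (\<lambda>_. borel))"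
  shows "(\<integral>\<^sup>+ z. g (restrict (\<lambda>i. \<theta> i + z i) J) \<partial>gauss_noise n \<sigma>)
       = (\<integral>\<^sup>+ w. ennreal (gauss_lik \<sigma> J \<theta> w) * g w \<partial>PiM J (\<lambda>_. lborel))"
proof -
  let ?N = "density lborel (normal_density 0 \<sigma>)"
  interpret Z: product_prob_space "\<lambda>_::nat. ?N"
    using \<sigma> by (intro product_prob_spaceI prob_space_normal_density)
  have shift: "(\<lambda>z. restrict (\<lambda>i. \<theta> i + z i) J) \<in> PiM J (\<lambda>_. ?N) \<rightarrow>\<^sub>M PiM J (\<lambda>_. borel)"
    by (intro measurable_restrict) auto
  have "(\<integral>\<^sup>+ z. g (restrict (\<lambda>i. \<theta> i + z i) J) \<partial>PiM {1..n} (\<lambda>_. ?N))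
      = (\<integral>\<^sup>+ z. g (restrict (\<lambda>i. \<theta> i + restrict z J i) J) \<partial>PiM {1..n} (\<lambda>_. ?N))"
    by (intro nn_integral_cong) (simp add: restrict_def cong: if_cong)
  also have "\<dots> = (\<integral>\<^sup>+ z. g (restrict (\<lambda>i. \<theta> i + z i) J)
      \<partial>distr (PiM {1..n} (\<lambda>_. ?N)) (PiM J (\<lambda>_. ?N)) (\<lambda>z. restrict z J))"
    using J measurable_comp[OF shift g]
    by (subst nn_integral_distr) (auto simp: comp_def intro!: measurable_restrict_subset)
  also have "\<dots> = (\<integral>\<^sup>+ z. g (restrict (\<lambda>i. \<theta> i + z i) J) \<partial>PiM J (\<lambda>_. ?N))"
    using Z.distr_restrict[OF J] by simp
  also have "\<dots> = (\<integral>\<^sup>+ w. ennreal (gauss_lik \<sigma> J \<theta> w) * g w \<partial>PiM J (\<lambda>_. lborel))"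
    using J by (intro nn_integral_gauss_noise_shift[OF \<sigma> _ g]) (auto intro: finite_subset)
  finally show ?thesis
    unfolding gauss_noise_def .
qed

lemma risk_eq_sum_gauss_sq_risk:
  assumes \<sigma>: "\<sigma> > 0" and x: "forecaster n x"
  shows "risk n \<sigma> x \<theta> = (\<Sum>t=1..n. gauss_sq_risk \<sigma> {1..<t} \<theta> (x t) (\<theta> t))"
proof -
  have x_meas[measurable]: "x t \<in> borel_measurable (PiM {1..<t} (\<lambda>_. borel))" if "t \<in> {1..n}" for t
    using x that unfolding forecaster_def by auto
  have "risk n \<sigma> x \<theta> = (\<integral>\<^sup>+ z. (\<Sum>t=1..n. ennreal ((x t (restrict (\<lambda>i. \<theta> i + z i) {1..<t}) - \<theta> t)\<^sup>2))
      \<partial>gauss_noise n \<sigma>)"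
    unfolding risk_def by (intro nn_integral_cong) simp
  also have "\<dots> = (\<Sum>t=1..n. \<integral>\<^sup>+ z. ennreal ((x t (restrict (\<lambda>i. \<theta> i + z i) {1..<t}) - \<theta> t)\<^sup>2)
      \<partial>gauss_noise n \<sigma>)"
  proof (rule nn_integral_sum)
    fix t assume t: "t \<in> {1..n}"
    have "(\<lambda>z. restrict (\<lambda>i. \<theta> i + z i) {1..<t}) \<in> measurable (gauss_noise n \<sigma>) (PiM {1..<t} (\<lambda>_. borel))"
      unfolding gauss_noise_def using t by (intro measurable_restrict) auto
    from measurable_comp[OF this x_meas[OF t]]
    show "(\<lambda>z. ennreal ((x t (restrict (\<lambda>i. \<theta> i + z i) {1..<t}) - \<theta> t)\<^sup>2)) \<in> borel_measurable (gauss_noise n \<sigma>)"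
      by (simp add: comp_def)
  qed
  also have "\<dots> = (\<Sum>t=1..n. gauss_sq_risk \<sigma> {1..<t} \<theta> (x t) (\<theta> t))"
  proof (intro sum.cong refl)
    fix t assume t: "t \<in> {1..n}"
    have g: "(\<lambda>w. ennreal ((x t w - \<theta> t)\<^sup>2)) \<in> borel_measurable (PiM {1..<t} (\<lambda>_. borel))"
      using t by measurable
    have J: "{1..<t} \<subseteq> {1..n}"
      using t by auto
    show "(\<integral>\<^sup>+ z. ennreal ((x t (restrict (\<lambda>i. \<theta> i + z i) {1..<t}) - \<theta> t)\<^sup>2) \<partial>gauss_noise n \<sigma>)
        = gauss_sq_risk \<sigma> {1..<t} \<theta> (x t) (\<theta> t)"
      using nn_integral_gauss_noise_marginal[where \<theta>=\<theta>, OF \<sigma> J g] by (simp add: gauss_sq_risk_def ennreal_mult'')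
  qed
  finally show ?thesis .
qed

section \<open>Le Cam's two-point bound\<close>

lemma nn_integral_PiM_scaled_normal_density:
  assumes \<sigma>: "\<sigma> > 0" and J: "finite J" and c: "\<And>i. c i \<ge> 0"
  shows "(\<integral>\<^sup>+ w. ennreal (\<Prod>i\<in>J. c i * normal_density (m i) \<sigma> (w i)) \<partial>PiM J (\<lambda>_. lborel))
       = ennreal (\<Prod>i\<in>J. c i)"
proof -
  interpret L: product_sigma_finite "\<lambda>_. lborel" by unfold_locales
  have factor: "(\<integral>\<^sup>+ y. ennreal (c i * normal_density (m i) \<sigma> y) \<partial>lborel) = ennreal (c i)" for i
  proof -
    have "(\<integral>\<^sup>+ y. ennreal (c i * normal_density (m i) \<sigma> y) \<partial>lborel)
        = ennreal (c i) * (\<integral>\<^sup>+ y. ennreal (normal_density (m i) \<sigma> y) \<partial>lborel)"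
      using c by (subst nn_integral_cmult[symmetric]) (auto simp: ennreal_mult)
    also have "(\<integral>\<^sup>+ y. ennreal (normal_density (m i) \<sigma> y) \<partial>lborel) = 1"
      using \<sigma> by (subst nn_integral_eq_integral) auto
    finally show ?thesis by simp
  qed
  have "(\<integral>\<^sup>+ w. ennreal (\<Prod>i\<in>J. c i * normal_density (m i) \<sigma> (w i)) \<partial>PiM J (\<lambda>_. lborel))
      = (\<integral>\<^sup>+ w. (\<Prod>i\<in>J. ennreal (c i * normal_density (m i) \<sigma> (w i))) \<partial>PiM J (\<lambda>_. lborel))"
    using c by (intro nn_integral_cong) (simp add: prod_ennreal)
  also have "\<dots> = (\<Prod>i\<in>J. \<integral>\<^sup>+ y. ennreal (c i * normal_density (m i) \<sigma> y) \<partial>lborel)"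
    by (subst L.product_nn_integral_prod[OF J]) auto
  also have "\<dots> = ennreal (\<Prod>i\<in>J. c i)"
    using c by (simp add: factor prod_ennreal)
  finally show ?thesis .
qed

lemma nn_integral_gauss_lik:
  assumes "\<sigma> > 0" "finite J"
  shows "(\<integral>\<^sup>+ w. ennreal (gauss_lik \<sigma> J \<theta> w) \<partial>PiM J (\<lambda>_. lborel)) = 1"
  using nn_integral_PiM_scaled_normal_density[OF assms, of "\<lambda>_. 1" \<theta>] by (simp add: gauss_lik_def)

lemma normal_density_mult_eq_sq:
  assumes \<sigma>: "\<sigma> > 0"
  shows "normal_density a \<sigma> y * normal_density b \<sigma> y
       = (exp (-(a - b)\<^sup>2 / (8 * \<sigma>\<^sup>2)) * normal_density ((a + b) / 2) \<sigma> y)\<^sup>2"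
proof -
  have "(exp (-(a - b)\<^sup>2 / (8 * \<sigma>\<^sup>2)) * exp (-(y - (a + b) / 2)\<^sup>2 / (2 * \<sigma>\<^sup>2)))\<^sup>2
      = exp (2 * (-(a - b)\<^sup>2 / (8 * \<sigma>\<^sup>2) + -(y - (a + b) / 2)\<^sup>2 / (2 * \<sigma>\<^sup>2)))"
    by (simp add: power2_eq_square exp_add[symmetric])
  also have "2 * (-(a - b)\<^sup>2 / (8 * \<sigma>\<^sup>2) + -(y - (a + b) / 2)\<^sup>2 / (2 * \<sigma>\<^sup>2))
      = -(y - a)\<^sup>2 / (2 * \<sigma>\<^sup>2) + -(y - b)\<^sup>2 / (2 * \<sigma>\<^sup>2)"
    using \<sigma> by (simp add: field_simps power2_eq_square)
  finally have "(exp (-(a - b)\<^sup>2 / (8 * \<sigma>\<^sup>2)) * exp (-(y - (a + b) / 2)\<^sup>2 / (2 * \<sigma>\<^sup>2)))\<^sup>2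
      = exp (-(y - a)\<^sup>2 / (2 * \<sigma>\<^sup>2)) * exp (-(y - b)\<^sup>2 / (2 * \<sigma>\<^sup>2))"
    by (simp add: exp_add[symmetric])
  then show ?thesis
    unfolding normal_density_def by (simp add: power_mult_distrib power2_eq_square mult_ac)
qed

lemma geometric_mean_le_min_add:
  fixes p q s l :: real
  assumes "0 \<le> p" "0 \<le> q" "0 \<le> s" "s\<^sup>2 = p * q" "l > 0"
  shows "s \<le> l / 2 * min p q + (p + q) / (2 * l)"
proof -
  define m M where "m = min p q" and "M = max p q"
  have mM: "s\<^sup>2 = m * M" "0 \<le> m" "0 \<le> M" "M \<le> p + q"
    using assms unfolding m_def M_def by (auto simp: min_def max_def mult.commute)
  have "(l * m + M / l)\<^sup>2 = (l * m - M / l)\<^sup>2 + (2 * s)\<^sup>2"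
    using \<open>l > 0\<close> mM(1) by (simp add: power2_eq_square field_simps)
  then have "(2 * s)\<^sup>2 \<le> (l * m + M / l)\<^sup>2"
    by simp
  then have "2 * s \<le> l * m + M / l"
    by (rule power2_le_imp_le) (use mM \<open>l > 0\<close> in simp)
  moreover have "M / l \<le> (p + q) / l"
    using mM \<open>l > 0\<close> by (simp add: divide_right_mono)
  ultimately show ?thesis
    unfolding m_def using \<open>l > 0\<close> by (simp add: field_simps)
qed

lemma nn_integral_geometric_mean_le:
  fixes p q s :: "'a \<Rightarrow> real"
  assumes [measurable]: "p \<in> borel_measurable M" "q \<in> borel_measurable M"
    and nonneg: "\<And>w. 0 \<le> p w" "\<And>w. 0 \<le> q w" "\<And>w. 0 \<le> s w"
    and p1: "(\<integral>\<^sup>+ w. ennreal (p w) \<partial>M) = 1" and q1: "(\<integral>\<^sup>+ w. ennreal (q w) \<partial>M) = 1"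
    and s_sq: "\<And>w. (s w)\<^sup>2 = p w * q w" and l: "l > 0"
  shows "(\<integral>\<^sup>+ w. ennreal (s w) \<partial>M) \<le> ennreal (l / 2) * (\<integral>\<^sup>+ w. ennreal (min (p w) (q w)) \<partial>M) + ennreal (1 / l)"
proof -
  have "(\<integral>\<^sup>+ w. ennreal (s w) \<partial>M) \<le> (\<integral>\<^sup>+ w. ennreal (l / 2) * ennreal (min (p w) (q w))
      + ennreal (1 / (2 * l)) * (ennreal (p w) + ennreal (q w)) \<partial>M)"
  proof (intro nn_integral_mono)
    fix w
    have "s w \<le> l / 2 * min (p w) (q w) + (p w + q w) / (2 * l)"
      using nonneg s_sq l by (rule geometric_mean_le_min_add)
    then show "ennreal (s w) \<le> ennreal (l / 2) * ennreal (min (p w) (q w))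
        + ennreal (1 / (2 * l)) * (ennreal (p w) + ennreal (q w))"
      using l nonneg[of w]
      by (simp add: ennreal_mult[symmetric] ennreal_plus[symmetric] ennreal_leI del: ennreal_plus)
  qed
  also have "\<dots> = ennreal (l / 2) * (\<integral>\<^sup>+ w. ennreal (min (p w) (q w)) \<partial>M) + ennreal (1 / (2 * l)) * 2"
    by (simp add: nn_integral_add nn_integral_cmult p1 q1 one_add_one)
  also have "ennreal (1 / (2 * l)) * 2 = ennreal (1 / (2 * l) * 2)"
    by (subst ennreal_mult'') auto
  also have "1 / (2 * l) * 2 = 1 / l"
    by simp
  finally show ?thesis .
qed

text \<open>A is the affinity (Bhattacharyya coefficient) of the densities p and q; take l = 4 / A
  in the previous lemma.\<close>
lemma nn_integral_min_ge_affinity: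
  fixes p q s :: "'a \<Rightarrow> real"
  assumes [measurable]: "p \<in> borel_measurable M" "q \<in> borel_measurable M"
    and nonneg: "\<And>w. 0 \<le> p w" "\<And>w. 0 \<le> q w" "\<And>w. 0 \<le> s w"
    and p1: "(\<integral>\<^sup>+ w. ennreal (p w) \<partial>M) = 1" and q1: "(\<integral>\<^sup>+ w. ennreal (q w) \<partial>M) = 1"
    and s_sq: "\<And>w. (s w)\<^sup>2 = p w * q w"
    and A: "(\<integral>\<^sup>+ w. ennreal (s w) \<partial>M) = ennreal A" "A > 0"
  shows "ennreal (3 * A\<^sup>2 / 8) \<le> (\<integral>\<^sup>+ w. ennreal (min (p w) (q w)) \<partial>M)"
proof -
  define l where "l = 4 / A"
  have l: "l > 0" using A(2) unfolding l_def by simp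
  have "(\<integral>\<^sup>+ w. ennreal (min (p w) (q w)) \<partial>M) \<le> (\<integral>\<^sup>+ w. ennreal (p w) \<partial>M)"
    by (intro nn_integral_mono ennreal_leI) simp
  then obtain r where r: "(\<integral>\<^sup>+ w. ennreal (min (p w) (q w)) \<partial>M) = ennreal r" "0 \<le> r"
    using p1 by (metis ennreal_cases ennreal_le_1 ennreal_one_neq_top neq_top_trans)
  have "ennreal A \<le> ennreal (l / 2) * ennreal r + ennreal (1 / l)"
    using nn_integral_geometric_mean_le[OF _ _ nonneg p1 q1 s_sq l] unfolding A(1) r(1) by simp
  also have "\<dots> = ennreal (l / 2 * r + 1 / l)"
    using l r(2) by (simp add: ennreal_mult[symmetric] ennreal_plus[symmetric] del: ennreal_plus)
  finally have "A \<le> l / 2 * r + 1 / l"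
    by (rule ennreal_le_iff[THEN iffD1, rotated]) (use l r in simp)
  then have "3 * A\<^sup>2 / 8 \<le> r"
    using A(2) unfolding l_def by (simp add: field_simps power2_eq_square)
  then show ?thesis
    unfolding r(1) by (intro ennreal_leI)
qed

lemma nn_integral_min_gauss_lik_ge:
  fixes \<theta> \<theta>' :: "'i \<Rightarrow> real"
  assumes \<sigma>: "\<sigma> > 0" and J: "finite J"
  shows "ennreal (3 / 8 * (\<Prod>i\<in>J. exp (-(\<theta> i - \<theta>' i)\<^sup>2 / (8 * \<sigma>\<^sup>2)))\<^sup>2)
       \<le> (\<integral>\<^sup>+ w. ennreal (min (gauss_lik \<sigma> J \<theta> w) (gauss_lik \<sigma> J \<theta>' w)) \<partial>PiM J (\<lambda>_. lborel))"
proof -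
  define e where "e i = exp (-(\<theta> i - \<theta>' i)\<^sup>2 / (8 * \<sigma>\<^sup>2))" for i
  define s where "s w = (\<Prod>i\<in>J. e i * normal_density ((\<theta> i + \<theta>' i) / 2) \<sigma> (w i))" for w
  have "(s w)\<^sup>2 = gauss_lik \<sigma> J \<theta> w * gauss_lik \<sigma> J \<theta>' w" for w
    unfolding s_def e_def gauss_lik_def
    by (simp add: prod_power_distrib prod.distrib[symmetric] normal_density_mult_eq_sq[OF \<sigma>])
  moreover have "(\<integral>\<^sup>+ w. ennreal (s w) \<partial>PiM J (\<lambda>_. lborel)) = ennreal (\<Prod>i\<in>J. e i)"
    unfolding s_def by (rule nn_integral_PiM_scaled_normal_density[OF \<sigma> J]) (simp add: e_def)
  moreover have "0 \<le> s w" for w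
    unfolding s_def e_def by (intro prod_nonneg) auto
  moreover have "(\<Prod>i\<in>J. e i) > 0"
    unfolding e_def by (intro prod_pos) auto
  ultimately have "ennreal (3 * (\<Prod>i\<in>J. e i)\<^sup>2 / 8)
      \<le> (\<integral>\<^sup>+ w. ennreal (min (gauss_lik \<sigma> J \<theta> w) (gauss_lik \<sigma> J \<theta>' w)) \<partial>PiM J (\<lambda>_. lborel))"
    by (intro nn_integral_min_ge_affinity) (auto simp: gauss_lik_nonneg nn_integral_gauss_lik[OF \<sigma> J])
  then show ?thesis
    unfolding e_def by simp
qed

lemma min_mult_sq_diff_le:
  fixes P P' v a b :: real
  assumes "0 \<le> P" "0 \<le> P'"
  shows "min P P' * ((a - b)\<^sup>2 / 2) \<le> P * (v - a)\<^sup>2 + P' * (v - b)\<^sup>2"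
proof -
  have "(v - a)\<^sup>2 + (v - b)\<^sup>2 = (a - b)\<^sup>2 / 2 + (2 * v - a - b)\<^sup>2 / 2"
    by (simp add: power2_eq_square field_simps)
  then have "min P P' * ((a - b)\<^sup>2 / 2) \<le> min P P' * ((v - a)\<^sup>2 + (v - b)\<^sup>2)"
    using assms by (intro mult_left_mono) auto
  also have "\<dots> \<le> P * (v - a)\<^sup>2 + P' * (v - b)\<^sup>2"
    by (simp add: distrib_left add_mono mult_right_mono)
  finally show ?thesis .
qed

lemma gauss_sq_risk_pair_ge:
  fixes \<theta> \<theta>' :: "'i \<Rightarrow> real"
  assumes \<sigma>: "\<sigma> > 0" and J: "finite J" and f: "f \<in> borel_measurable (PiM J (\<lambda>_. borel))"
  shows "ennreal ((a - b)\<^sup>2 * 3 / 16 * (\<Prod>i\<in>J. exp (-(\<theta> i - \<theta>' i)\<^sup>2 / (8 * \<sigma>\<^sup>2)))\<^sup>2)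
       \<le> gauss_sq_risk \<sigma> J \<theta> f a + gauss_sq_risk \<sigma> J \<theta>' f b"
proof -
  let ?Q = "PiM J (\<lambda>_. lborel)"
  let ?P = "gauss_lik \<sigma> J \<theta>" and ?P' = "gauss_lik \<sigma> J \<theta>'"
  define A where "A = (\<Prod>i\<in>J. exp (-(\<theta> i - \<theta>' i)\<^sup>2 / (8 * \<sigma>\<^sup>2)))"
  have [measurable]: "f \<in> borel_measurable ?Q"
    using f by (subst measurable_cong_sets[OF sets_PiM_cong refl]) (auto simp: sets_lborel)
  have "ennreal ((a - b)\<^sup>2 * 3 / 16 * A\<^sup>2) = ennreal ((a - b)\<^sup>2 / 2) * ennreal (3 / 8 * A\<^sup>2)"
    by (simp add: ennreal_mult[symmetric])
  also have "\<dots> \<le> ennreal ((a - b)\<^sup>2 / 2) * (\<integral>\<^sup>+ w. ennreal (min (?P w) (?P' w)) \<partial>?Q)"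
    unfolding A_def by (intro mult_left_mono nn_integral_min_gauss_lik_ge \<sigma> J) auto
  also have "\<dots> = (\<integral>\<^sup>+ w. ennreal (min (?P w) (?P' w) * ((a - b)\<^sup>2 / 2)) \<partial>?Q)"
    by (subst nn_integral_cmult[symmetric])
       (auto intro!: nn_integral_cong simp: ennreal_mult[symmetric] gauss_lik_nonneg mult.commute)
  also have "\<dots> \<le> (\<integral>\<^sup>+ w. ennreal (?P w * (f w - a)\<^sup>2) + ennreal (?P' w * (f w - b)\<^sup>2) \<partial>?Q)"
  proof (intro nn_integral_mono)
    fix w
    have "min (?P w) (?P' w) * ((a - b)\<^sup>2 / 2) \<le> ?P w * (f w - a)\<^sup>2 + ?P' w * (f w - b)\<^sup>2"
      by (intro min_mult_sq_diff_le gauss_lik_nonneg)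
    then show "ennreal (min (?P w) (?P' w) * ((a - b)\<^sup>2 / 2))
        \<le> ennreal (?P w * (f w - a)\<^sup>2) + ennreal (?P' w * (f w - b)\<^sup>2)"
      by (subst ennreal_plus[symmetric]) (auto intro!: ennreal_leI mult_nonneg_nonneg gauss_lik_nonneg simp del: ennreal_plus)
  qed
  also have "\<dots> = gauss_sq_risk \<sigma> J \<theta> f a + gauss_sq_risk \<sigma> J \<theta>' f b"
    unfolding gauss_sq_risk_def by (subst nn_integral_add) auto
  finally show ?thesis
    unfolding A_def .
qed

lemma ennreal_le_SUP_of_average:
  fixes f :: "'b \<Rightarrow> ennreal" and g :: "'a \<Rightarrow> 'b"
  assumes E: "finite E" "E \<noteq> {}" and g: "\<And>e. e \<in> E \<Longrightarrow> g e \<in> S"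
    and avg: "of_nat (card E) * ennreal B \<le> (\<Sum>e\<in>E. f (g e))"
  shows "ennreal B \<le> (SUP \<theta>\<in>S. f \<theta>)"
proof -
  have "(\<Sum>e\<in>E. f (g e)) \<le> of_nat (card E) * (SUP \<theta>\<in>S. f \<theta>)"
    by (rule sum_bounded_above) (auto intro: SUP_upper g)
  with avg have "of_nat (card E) * ennreal B \<le> of_nat (card E) * (SUP \<theta>\<in>S. f \<theta>)"
    by (rule order_trans)
  then show ?thesis
    using E by (simp add: ennreal_mult_le_mult_iff)
qed

lemma sum_ge_of_involution:
  fixes F :: "'a \<Rightarrow> ennreal"
  assumes E: "finite E" and h: "\<And>e. e \<in> E \<Longrightarrow> h e \<in> E" "\<And>e. e \<in> E \<Longrightarrow> h (h e) = e"
    and c: "\<And>e. e \<in> E \<Longrightarrow> ennreal c \<le> F e + F (h e)" and c0: "c \<ge> 0"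
  shows "of_nat (card E) * ennreal (c / 2) \<le> (\<Sum>e\<in>E. F e)"
proof -
  have reindex: "(\<Sum>e\<in>E. F (h e)) = (\<Sum>e\<in>E. F e)"
    by (rule sum.reindex_bij_witness[where i=h and j=h]) (auto simp: h)
  have "2 * ennreal (c / 2) = ennreal c"
    using c0 by (simp add: ennreal_mult[symmetric] ennreal_numeral[symmetric] del: ennreal_numeral)
  then have "2 * (of_nat (card E) * ennreal (c / 2)) = (\<Sum>e\<in>E. ennreal c)"
    by (simp add: mult_ac)
  also have "\<dots> \<le> (\<Sum>e\<in>E. F e + F (h e))"
    by (intro sum_mono c)
  also have "\<dots> = 2 * (\<Sum>e\<in>E. F e)"
    by (simp add: sum.distrib reindex mult_2)
  finally show ?thesis
    by (simp add: ennreal_mult_le_mult_iff)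
qed

lemma SUP_risk_ge_two_point:
  assumes \<sigma>: "\<sigma> > 0" and x: "forecaster n x" and t: "t \<in> {1..n}"
    and \<theta>: "\<theta> \<in> \<Theta>" and \<theta>': "\<theta>' \<in> \<Theta>" and agree: "\<And>i. i \<in> {1..<t} \<Longrightarrow> \<theta> i = \<theta>' i"
  shows "ennreal ((\<theta> t - \<theta>' t)\<^sup>2 * 3 / 32) \<le> (SUP \<theta>\<in>\<Theta>. risk n \<sigma> x \<theta>)"
proof (rule ennreal_le_SUP_of_average[where E="UNIV :: bool set" and g="\<lambda>b. if b then \<theta> else \<theta>'"])
  have x_t: "x t \<in> borel_measurable (PiM {1..<t} (\<lambda>_. borel))"
    using x t unfolding forecaster_def by auto
  have affinity: "(\<Prod>i\<in>{1..<t}. exp (-(\<theta> i - \<theta>' i)\<^sup>2 / (8 * \<sigma>\<^sup>2))) = 1"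
    by (intro prod.neutral) (simp add: agree)
  have "of_nat (card (UNIV :: bool set)) * ennreal ((\<theta> t - \<theta>' t)\<^sup>2 * 3 / 32)
      = ennreal ((\<theta> t - \<theta>' t)\<^sup>2 * 3 / 16 * (\<Prod>i\<in>{1..<t}. exp (-(\<theta> i - \<theta>' i)\<^sup>2 / (8 * \<sigma>\<^sup>2)))\<^sup>2)"
    unfolding affinity by (simp add: ennreal_mult[symmetric] ennreal_numeral[symmetric] del: ennreal_numeral)
  also have "\<dots> \<le> gauss_sq_risk \<sigma> {1..<t} \<theta> (x t) (\<theta> t) + gauss_sq_risk \<sigma> {1..<t} \<theta>' (x t) (\<theta>' t)"
    by (rule gauss_sq_risk_pair_ge[OF \<sigma> finite_atLeastLessThan x_t])
  also have "\<dots> \<le> risk n \<sigma> x \<theta> + risk n \<sigma> x \<theta>'"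
    unfolding risk_eq_sum_gauss_sq_risk[OF \<sigma> x] using t by (intro add_mono member_le_sum) auto
  finally show "of_nat (card (UNIV :: bool set)) * ennreal ((\<theta> t - \<theta>' t)\<^sup>2 * 3 / 32)
      \<le> (\<Sum>b\<in>UNIV. risk n \<sigma> x (if b then \<theta> else \<theta>'))"
    by (simp add: UNIV_bool add.commute)
qed (use \<theta> \<theta>' in auto)

section \<open>Assouad's bound for block signals\<close>

abbreviation params :: "nat \<Rightarrow> real \<Rightarrow> real \<Rightarrow> (nat \<Rightarrow> real) set" where
  "params n C U \<equiv> {\<theta>. \<theta> \<in> TV_class n C \<and> \<bar>\<theta> 1\<bar> \<le> U}"

definition block :: "nat \<Rightarrow> nat \<Rightarrow> nat" where
  "block L i = (i - 1) div L"

definition block_signal :: "real \<Rightarrow> nat \<Rightarrow> (nat \<Rightarrow> bool) \<Rightarrow> nat \<Rightarrow> real" where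
  "block_signal d L \<epsilon> i = (if \<epsilon> (block L i) then d else - d)"

lemma block_signal_jump_le:
  assumes i: "2 \<le> i" and d: "d \<ge> 0"
  shows "\<bar>block_signal d L \<epsilon> i - block_signal d L \<epsilon> (i - 1)\<bar> \<le> (if L dvd (i - 1) then 2 * d else 0)"
proof (cases "L dvd (i - 1)")
  case True
  then show ?thesis using d by (auto simp: block_signal_def)
next
  case False
  have "i - 1 = Suc (i - 1 - 1)" using i by auto
  then have "block L i = block L (i - 1)"
    unfolding block_def using False by (metis div_Suc dvd_eq_mod_eq_0)
  then show ?thesis using False by (simp add: block_signal_def)
qed

lemma card_block_starts_le:
  assumes L: "L \<ge> 1"
  shows "card {i \<in> {2..n}. L dvd (i - 1)} \<le> (n - 1) div L"
proof -
  have "{i \<in> {2..n}. L dvd (i - 1)} \<subseteq> (\<lambda>k. k * L + 1) ` {1..(n - 1) div L}"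
  proof
    fix i assume i: "i \<in> {i \<in> {2..n}. L dvd (i - 1)}"
    then obtain k where k: "i - 1 = L * k" by (auto elim!: dvdE)
    have "k \<ge> 1" using i k by (cases k) auto
    moreover have "(i - 1) div L \<le> (n - 1) div L"
      using i by (intro div_le_mono) auto
    then have "k \<le> (n - 1) div L"
      using k L by simp
    ultimately show "i \<in> (\<lambda>k. k * L + 1) ` {1..(n - 1) div L}"
      using i k by (auto simp: image_iff mult.commute intro!: bexI[of _ k])
  qed
  then have "card {i \<in> {2..n}. L dvd (i - 1)} \<le> card ((\<lambda>k. k * L + 1) ` {1..(n - 1) div L})"
    by (intro card_mono) auto
  also have "\<dots> \<le> (n - 1) div L"
    using card_image_le[of "{1..(n - 1) div L}" "\<lambda>k. k * L + 1"] by simp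
  finally show ?thesis .
qed

lemma block_signal_TV_le:
  assumes L: "L \<ge> 1" and d: "d \<ge> 0"
  shows "(\<Sum>i=2..n. \<bar>block_signal d L \<epsilon> i - block_signal d L \<epsilon> (i - 1)\<bar>) \<le> 2 * d * real ((n - 1) div L)"
proof -
  have "(\<Sum>i=2..n. \<bar>block_signal d L \<epsilon> i - block_signal d L \<epsilon> (i - 1)\<bar>)
      \<le> (\<Sum>i=2..n. if L dvd (i - 1) then 2 * d else 0)"
    using d by (intro sum_mono block_signal_jump_le) auto
  also have "\<dots> = 2 * d * real (card {i \<in> {2..n}. L dvd (i - 1)})"
    by (simp add: sum.inter_filter[symmetric])
  also have "\<dots> \<le> 2 * d * real ((n - 1) div L)"
    using card_block_starts_le[OF L, of n] d by (intro mult_left_mono) auto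
  finally show ?thesis .
qed

lemma card_earlier_same_block_le:
  assumes L: "L \<ge> 1"
  shows "card {i \<in> {1..<t}. block L i = block L t} \<le> L"
proof -
  define q where "q = block L t"
  have "{i \<in> {1..<t}. block L i = block L t} \<subseteq> {q * L + 1..<t}"
  proof
    fix i assume i: "i \<in> {i \<in> {1..<t}. block L i = block L t}"
    then have "q * L \<le> i - 1"
      unfolding q_def block_def by (metis (mono_tags) div_times_less_eq_dividend mem_Collect_eq)
    then show "i \<in> {q * L + 1..<t}" using i by auto
  qed
  then have "card {i \<in> {1..<t}. block L i = block L t} \<le> t - (q * L + 1)"
    using card_mono[of "{q * L + 1..<t}"] by simp
  also have "\<dots> = (t - 1) mod L"
    unfolding q_def block_def by (simp add: minus_div_mult_eq_mod[symmetric])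
  also have "\<dots> \<le> L"
    using L by (simp add: less_imp_le)
  finally show ?thesis .
qed

text \<open>Flipping the block of t changes only the at most L earlier means of that block, each by
  2 d, so the squared distance 4 d^2 L \<le> 4 \<sigma>^2 of the mean vectors keeps the affinity away
  from 0.\<close>
lemma block_flip_affinity_ge:
  fixes \<epsilon> :: "nat \<Rightarrow> bool" and t :: nat
  assumes \<sigma>: "\<sigma> > 0" and L: "L \<ge> 1" and dL: "d\<^sup>2 * real L \<le> \<sigma>\<^sup>2"
  defines "\<theta> \<equiv> block_signal d L \<epsilon>" and "\<theta>' \<equiv> block_signal d L (\<epsilon>(block L t := \<not> \<epsilon> (block L t)))"
  shows "1 / 3 \<le> (\<Prod>i\<in>{1..<t}. exp (-(\<theta> i - \<theta>' i)\<^sup>2 / (8 * \<sigma>\<^sup>2)))\<^sup>2"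
proof -
  define S where "S = {i \<in> {1..<t}. block L i = block L t}"
  define A where "A = (\<Prod>i\<in>{1..<t}. exp (-(\<theta> i - \<theta>' i)\<^sup>2 / (8 * \<sigma>\<^sup>2)))"
  have diff: "(\<theta> i - \<theta>' i)\<^sup>2 = (if block L i = block L t then 4 * d\<^sup>2 else 0)" for i
    unfolding \<theta>_def \<theta>'_def block_signal_def by (auto simp: power2_eq_square)
  have "A = exp (\<Sum>i\<in>{1..<t}. -(\<theta> i - \<theta>' i)\<^sup>2 / (8 * \<sigma>\<^sup>2))"
    unfolding A_def by (simp add: exp_sum)
  also have "(\<Sum>i\<in>{1..<t}. -(\<theta> i - \<theta>' i)\<^sup>2 / (8 * \<sigma>\<^sup>2)) = - (\<Sum>i\<in>{1..<t}. (\<theta> i - \<theta>' i)\<^sup>2) / (8 * \<sigma>\<^sup>2)"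
    by (simp add: sum_divide_distrib sum_negf)
  also have "(\<Sum>i\<in>{1..<t}. (\<theta> i - \<theta>' i)\<^sup>2) = 4 * d\<^sup>2 * real (card S)"
    unfolding diff S_def by (simp add: sum.inter_filter[symmetric])
  also have "- (4 * d\<^sup>2 * real (card S)) / (8 * \<sigma>\<^sup>2) = - (d\<^sup>2 * real (card S)) / (2 * \<sigma>\<^sup>2)"
    by simp
  finally have A: "A = exp (- (d\<^sup>2 * real (card S)) / (2 * \<sigma>\<^sup>2))" .
  have "d\<^sup>2 * real (card S) \<le> \<sigma>\<^sup>2"
    using card_earlier_same_block_le[OF L, of t] dL unfolding S_def
    by (meson mult_left_mono of_nat_le_iff order_trans zero_le_power2)
  then have "exp (-1 / 2) \<le> A"
    unfolding A using \<sigma> by (simp add: field_simps)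
  then have "exp (-1) \<le> A\<^sup>2"
    using power_mono[of "exp (-1 / 2)" A 2] by (simp add: power2_eq_square exp_add[symmetric])
  moreover have "1 / 3 \<le> exp (-1 :: real)"
    using exp_le by (simp add: exp_minus field_simps)
  ultimately show ?thesis
    unfolding A_def by linarith
qed

lemma gauss_sq_risk_block_flip_ge:
  fixes \<epsilon> :: "nat \<Rightarrow> bool"
  assumes \<sigma>: "\<sigma> > 0" and f: "f \<in> borel_measurable (PiM {1..<t} (\<lambda>_. borel))"
    and L: "L \<ge> 1" and dL: "d\<^sup>2 * real L \<le> \<sigma>\<^sup>2"
  defines "\<theta> \<equiv> block_signal d L \<epsilon>" and "\<theta>' \<equiv> block_signal d L (\<epsilon>(block L t := \<not> \<epsilon> (block L t)))"
  shows "ennreal (d\<^sup>2 / 4) \<le> gauss_sq_risk \<sigma> {1..<t} \<theta> f (\<theta> t) + gauss_sq_risk \<sigma> {1..<t} \<theta>' f (\<theta>' t)"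
proof -
  define A where "A = (\<Prod>i\<in>{1..<t}. exp (-(\<theta> i - \<theta>' i)\<^sup>2 / (8 * \<sigma>\<^sup>2)))"
  have "d\<^sup>2 * 1 \<le> d\<^sup>2 * (3 * A\<^sup>2)"
    using block_flip_affinity_ge[OF \<sigma> L dL, of \<epsilon> t] unfolding A_def \<theta>_def \<theta>'_def
    by (intro mult_left_mono) auto
  moreover have "(\<theta> t - \<theta>' t)\<^sup>2 = 4 * d\<^sup>2"
    unfolding \<theta>_def \<theta>'_def block_signal_def by (auto simp: power2_eq_square)
  ultimately have "d\<^sup>2 / 4 \<le> (\<theta> t - \<theta>' t)\<^sup>2 * 3 / 16 * A\<^sup>2"
    by (simp add: field_simps)
  then have "ennreal (d\<^sup>2 / 4) \<le> ennreal ((\<theta> t - \<theta>' t)\<^sup>2 * 3 / 16 * A\<^sup>2)"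
    by (rule ennreal_leI)
  also have "\<dots> \<le> gauss_sq_risk \<sigma> {1..<t} \<theta> f (\<theta> t) + gauss_sq_risk \<sigma> {1..<t} \<theta>' f (\<theta>' t)"
    unfolding A_def by (rule gauss_sq_risk_pair_ge[OF \<sigma> finite_atLeastLessThan f])
  finally show ?thesis .
qed

text \<open>Assouad's argument: average over all sign patterns of the n possible blocks, pairing each
  pattern with the one flipped on the block containing t.\<close>
lemma SUP_risk_ge_block_signal:
  assumes \<sigma>: "\<sigma> > 0" and x: "forecaster n x" and L: "L \<ge> 1" and d: "d > 0"
    and dL: "d\<^sup>2 * real L \<le> \<sigma>\<^sup>2" and TV: "2 * d * real ((n - 1) div L) \<le> C" and dU: "d \<le> U"
  shows "ennreal (real n * d\<^sup>2 / 8) \<le> (SUP \<theta>\<in>params n C U. risk n \<sigma> x \<theta>)"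
proof -
  define E where "E = Pi\<^sub>E {..<n} (\<lambda>_. UNIV :: bool set)"
  have E: "finite E" "E \<noteq> {}"
    unfolding E_def by (auto intro!: finite_PiE simp: PiE_eq_empty_iff)
  have mem: "block_signal d L \<epsilon> \<in> params n C U" for \<epsilon>
    using block_signal_TV_le[OF L, where d=d and n=n and \<epsilon>=\<epsilon>] TV d dU unfolding TV_class_def by (auto simp: block_signal_def)
  have per_t: "of_nat (card E) * ennreal (d\<^sup>2 / 4 / 2)
      \<le> (\<Sum>\<epsilon>\<in>E. gauss_sq_risk \<sigma> {1..<t} (block_signal d L \<epsilon>) (x t) (block_signal d L \<epsilon> t))"
    if t: "t \<in> {1..n}" for t
  proof (rule sum_ge_of_involution[OF E(1), where h="\<lambda>\<epsilon>. \<epsilon>(block L t := \<not> \<epsilon> (block L t))"])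
    have "block L t < n"
      using t L unfolding block_def by (meson atLeastAtMost_iff div_le_dividend diff_less le_less_trans less_le_trans zero_less_one)
    then show "\<epsilon>(block L t := \<not> \<epsilon> (block L t)) \<in> E" if "\<epsilon> \<in> E" for \<epsilon>
      using that unfolding E_def by (auto simp: PiE_iff extensional_def)
    have "x t \<in> borel_measurable (PiM {1..<t} (\<lambda>_. borel))"
      using x t unfolding forecaster_def by auto
    then show "ennreal (d\<^sup>2 / 4) \<le> gauss_sq_risk \<sigma> {1..<t} (block_signal d L \<epsilon>) (x t) (block_signal d L \<epsilon> t)
        + gauss_sq_risk \<sigma> {1..<t} (block_signal d L (\<epsilon>(block L t := \<not> \<epsilon> (block L t)))) (x t)
            (block_signal d L (\<epsilon>(block L t := \<not> \<epsilon> (block L t))) t)" for \<epsilon>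
      by (rule gauss_sq_risk_block_flip_ge[OF \<sigma> _ L dL])
  qed auto
  have "of_nat (card E) * ennreal (real n * d\<^sup>2 / 8) = (\<Sum>t=1..n. of_nat (card E) * ennreal (d\<^sup>2 / 4 / 2))"
    by (simp add: ennreal_mult[symmetric] ennreal_of_nat_eq_real_of_nat mult_ac)
  also have "\<dots> \<le> (\<Sum>t=1..n. \<Sum>\<epsilon>\<in>E. gauss_sq_risk \<sigma> {1..<t} (block_signal d L \<epsilon>) (x t) (block_signal d L \<epsilon> t))"
    by (intro sum_mono per_t)
  also have "\<dots> = (\<Sum>\<epsilon>\<in>E. risk n \<sigma> x (block_signal d L \<epsilon>))"
    by (subst sum.swap) (simp add: risk_eq_sum_gauss_sq_risk[OF \<sigma> x])
  finally show ?thesis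
    by (rule ennreal_le_SUP_of_average[OF E mem])
qed

section \<open>The three regimes\<close>

lemma SUP_risk_ge_U:
  assumes \<sigma>: "\<sigma> > 0" and x: "forecaster n x" and n: "n \<ge> 1" and C: "C \<ge> 0" and U: "U \<ge> 0"
  shows "ennreal (3 * U\<^sup>2 / 8) \<le> (SUP \<theta>\<in>params n C U. risk n \<sigma> x \<theta>)"
proof -
  have "(\<lambda>_. U) \<in> params n C U" "(\<lambda>_. - U) \<in> params n C U"
    using C U by (auto simp: TV_class_def)
  then have "ennreal (((\<lambda>_. U) 1 - (\<lambda>_. - U) 1)\<^sup>2 * 3 / 32) \<le> (SUP \<theta>\<in>params n C U. risk n \<sigma> x \<theta>)"
    by (intro SUP_risk_ge_two_point[where t=1, OF \<sigma> x]) (use n in auto)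
  then show ?thesis
    by (simp add: power2_eq_square)
qed

lemma SUP_risk_ge_C:
  assumes \<sigma>: "\<sigma> > 0" and x: "forecaster n x" and n: "n \<ge> 2" and C: "C \<ge> 0" and U: "U \<ge> 0"
  shows "ennreal (3 * C\<^sup>2 / 8) \<le> (SUP \<theta>\<in>params n C U. risk n \<sigma> x \<theta>)"
proof -
  define step where "step c i = (if 2 \<le> i then c else 0)" for c :: real and i :: nat
  have TV: "(\<Sum>i=2..n. \<bar>step c i - step c (i - 1)\<bar>) = \<bar>c\<bar>" for c
  proof -
    have "(\<Sum>i=2..n. \<bar>step c i - step c (i - 1)\<bar>) = (\<Sum>i\<in>{2..n}. if i = 2 then \<bar>c\<bar> else 0)"
      by (intro sum.cong refl) (auto simp: step_def)
    then show ?thesis using n by simp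
  qed
  have step1: "step c 1 = 0" for c
    by (simp add: step_def)
  have mem: "step C \<in> params n C U" "step (- C) \<in> params n C U"
    unfolding TV_class_def mem_Collect_eq TV step1 using C U by auto
  have "ennreal ((step C 2 - step (- C) 2)\<^sup>2 * 3 / 32) \<le> (SUP \<theta>\<in>params n C U. risk n \<sigma> x \<theta>)"
    by (rule SUP_risk_ge_two_point[where t=2, OF \<sigma> x _ mem]) (use n in \<open>auto simp: step_def\<close>)
  then show ?thesis
    by (simp add: step_def power2_eq_square)
qed

lemma rate_mult_powr_eq:
  fixes \<sigma> C n :: real
  assumes \<sigma>: "\<sigma> > 0" and C: "C > 0" and n: "n > 0"
  shows "(2 * \<sigma> * n / C) powr (2/3) * (n powr (1/3) * C powr (2/3) * \<sigma> powr (4/3)) = 2 powr (2/3) * n * \<sigma>\<^sup>2"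
proof -
  have "(2 * \<sigma> * n / C) powr (2/3) * C powr (2/3) = (2 * \<sigma> * n) powr (2/3)"
    using \<sigma> C n by (simp add: powr_mult[symmetric])
  also have "\<dots> = 2 powr (2/3) * \<sigma> powr (2/3) * n powr (2/3)"
    using \<sigma> n by (simp add: powr_mult)
  finally have "(2 * \<sigma> * n / C) powr (2/3) * C powr (2/3) = 2 powr (2/3) * \<sigma> powr (2/3) * n powr (2/3)" .
  then have "(2 * \<sigma> * n / C) powr (2/3) * (n powr (1/3) * C powr (2/3) * \<sigma> powr (4/3))
      = 2 powr (2/3) * (\<sigma> powr (2/3) * \<sigma> powr (4/3)) * (n powr (2/3) * n powr (1/3))"
    by (simp add: mult_ac)
  also have "\<sigma> powr (2/3) * \<sigma> powr (4/3) = \<sigma>\<^sup>2"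
    using \<sigma> by (simp add: powr_add[symmetric] powr_numeral)
  also have "n powr (2/3) * n powr (1/3) = n"
    using n by (simp add: powr_add[symmetric])
  finally show ?thesis
    by (simp add: mult_ac)
qed

lemma block_length_exists:
  fixes K :: real
  assumes K: "K > 1"
  obtains L :: nat where "L \<ge> 1" "K \<le> real L * sqrt (real L)" "real L \<le> 2 * K powr (2/3)"
proof
  define a where "a = K powr (2/3)"
  have a: "a > 1" unfolding a_def using K by (intro gr_one_powr) auto
  show "real (nat \<lceil>a\<rceil>) \<le> 2 * a" "nat \<lceil>a\<rceil> \<ge> 1"
    using a by linarith+
  have La: "a \<le> real (nat \<lceil>a\<rceil>)"
    using a by linarith
  have "K = a powr (3/2)"
    unfolding a_def using K by (simp add: powr_powr)
  also have "\<dots> \<le> real (nat \<lceil>a\<rceil>) powr (3/2)"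
    using La a by (intro powr_mono2) auto
  also have "\<dots> = real (nat \<lceil>a\<rceil>) powr (1 + 1/2)"
    by simp
  also have "\<dots> = real (nat \<lceil>a\<rceil>) powr 1 * real (nat \<lceil>a\<rceil>) powr (1/2)"
    by (rule powr_add)
  also have "\<dots> = real (nat \<lceil>a\<rceil>) * sqrt (real (nat \<lceil>a\<rceil>))"
    using a by (simp add: powr_half_sqrt)
  finally show "K \<le> real (nat \<lceil>a\<rceil>) * sqrt (real (nat \<lceil>a\<rceil>))" .
qed

lemma block_signal_fits_TV:
  fixes \<sigma> C :: real and n L :: nat
  assumes \<sigma>: "\<sigma> > 0" and C: "C > 0" and L: "L \<ge> 1"
    and K: "2 * \<sigma> * real n / C \<le> real L * sqrt (real L)"
  shows "2 * (\<sigma> / sqrt (real L)) * real ((n - 1) div L) \<le> C"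
proof -
  have L_pos: "real L > 0" using L by simp
  have "real ((n - 1) div L) \<le> real (n - 1) / real L"
    by (rule of_nat_div_le_of_nat)
  also have "\<dots> \<le> real n / real L"
    using L_pos by (intro divide_right_mono) auto
  finally have "2 * (\<sigma> / sqrt (real L)) * real ((n - 1) div L) \<le> 2 * (\<sigma> / sqrt (real L)) * (real n / real L)"
    using \<sigma> by (intro mult_left_mono) auto
  also have "\<dots> = (2 * \<sigma> * real n / C) * C / (real L * sqrt (real L))"
    using C by (simp add: field_simps)
  also have "\<dots> \<le> C"
    using K L_pos C by (simp add: divide_le_eq mult_right_mono mult.commute)
  finally show ?thesis .
qed

lemma rate_le_block_signal_energy:
  fixes \<sigma> C :: real and n L :: nat
  assumes \<sigma>: "\<sigma> > 0" and C: "C > 0" and n: "n > 0" and L: "L \<ge> 1"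
    and K: "real L \<le> 2 * (2 * \<sigma> * real n / C) powr (2/3)"
  shows "real n powr (1/3) * C powr (2/3) * \<sigma> powr (4/3) / 32 \<le> real n * (\<sigma> / sqrt (real L))\<^sup>2 / 8"
proof -
  define T where "T = real n powr (1/3) * C powr (2/3) * \<sigma> powr (4/3)"
  have "(2 * \<sigma> * real n / C) powr (2/3) * T = 2 powr (2/3) * real n * \<sigma>\<^sup>2"
    unfolding T_def using n by (intro rate_mult_powr_eq[OF \<sigma> C]) simp
  also have "\<dots> \<le> 2 * real n * \<sigma>\<^sup>2"
    using powr_mono[of "2/3" 1 "2::real"] by (intro mult_right_mono) auto
  finally have "(2 * \<sigma> * real n / C) powr (2/3) * T \<le> 2 * real n * \<sigma>\<^sup>2" .
  moreover have "real L * T \<le> 2 * (2 * \<sigma> * real n / C) powr (2/3) * T"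
    using K by (intro mult_right_mono) (simp_all add: T_def)
  ultimately have "real L * T \<le> 4 * real n * \<sigma>\<^sup>2"
    by linarith
  then show ?thesis
    unfolding T_def[symmetric] using L by (simp add: power_divide field_simps)
qed

lemma SUP_risk_ge_block_rate:
  assumes \<sigma>: "\<sigma> > 0" and C: "C > 0" and \<sigma>U: "\<sigma> \<le> U" and small: "C < 2 * \<sigma> * real n"
    and x: "forecaster n x"
  shows "ennreal (real n powr (1/3) * C powr (2/3) * \<sigma> powr (4/3) / 32)
       \<le> (SUP \<theta>\<in>params n C U. risk n \<sigma> x \<theta>)"
proof -
  have "2 * \<sigma> * real n / C > 1" using small C by simp
  then obtain L :: nat where L: "L \<ge> 1" "2 * \<sigma> * real n / C \<le> real L * sqrt (real L)"
      "real L \<le> 2 * (2 * \<sigma> * real n / C) powr (2/3)"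
    by (rule block_length_exists)
  define d where "d = \<sigma> / sqrt (real L)"
  have d: "d > 0" "d\<^sup>2 * real L = \<sigma>\<^sup>2" "d \<le> \<sigma>"
    unfolding d_def using \<sigma> L(1) by (simp_all add: power_divide divide_le_eq)
  have "ennreal (real n * d\<^sup>2 / 8) \<le> (SUP \<theta>\<in>params n C U. risk n \<sigma> x \<theta>)"
    using SUP_risk_ge_block_signal[OF \<sigma> x L(1) d(1) _ _ order_trans[OF d(3) \<sigma>U]] block_signal_fits_TV[OF \<sigma> C L(1,2)] d(2)
    unfolding d_def by simp
  moreover have "real n > 0" using small \<sigma> C by (auto intro: ccontr)
  then have "real n powr (1/3) * C powr (2/3) * \<sigma> powr (4/3) / 32 \<le> real n * d\<^sup>2 / 8"
    unfolding d_def using rate_le_block_signal_energy[OF \<sigma> C _ L(1,3)] by simp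
  ultimately show ?thesis
    by (meson ennreal_leI order_trans)
qed

lemma rate_le_sq_if_large:
  fixes \<sigma> C :: real and n :: nat
  assumes \<sigma>: "\<sigma> > 0" and large: "2 * \<sigma> * real n \<le> C" and n: "n \<ge> 1"
  shows "real n powr (1/3) * C powr (2/3) * \<sigma> powr (4/3) \<le> C\<^sup>2"
proof -
  have "2 * \<sigma> * real n = 2 * (real n * \<sigma>)" "0 \<le> real n * \<sigma>"
    using \<sigma> by simp_all
  then have "real n * \<sigma> \<le> C"
    using large by linarith
  have "real n powr (1/3) * \<sigma> powr (4/3) \<le> real n powr (4/3) * \<sigma> powr (4/3)"
    using n by (intro mult_right_mono powr_mono) auto
  also have "\<dots> = (real n * \<sigma>) powr (4/3)"
    using \<sigma> by (simp add: powr_mult)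
  also have "\<dots> \<le> C powr (4/3)"
    using \<open>real n * \<sigma> \<le> C\<close> \<sigma> by (intro powr_mono2) auto
  finally have "(real n powr (1/3) * \<sigma> powr (4/3)) * C powr (2/3) \<le> C powr (4/3) * C powr (2/3)"
    by (intro mult_right_mono) auto
  also have "\<dots> = C\<^sup>2"
    using \<open>0 \<le> real n * \<sigma>\<close> \<open>real n * \<sigma> \<le> C\<close> by (simp add: powr_add[symmetric] powr_numeral)
  finally show ?thesis
    by (simp add: mult_ac)
qed

lemma SUP_risk_ge_rate:
  assumes \<sigma>: "\<sigma> > 0" and C: "C > 0" and \<sigma>U: "\<sigma> \<le> U" and n: "n \<ge> 2" and x: "forecaster n x"
  shows "ennreal (real n powr (1/3) * C powr (2/3) * \<sigma> powr (4/3) / 32)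
       \<le> (SUP \<theta>\<in>params n C U. risk n \<sigma> x \<theta>)"
proof (cases "2 * \<sigma> * real n \<le> C")
  case True
  then have "real n powr (1/3) * C powr (2/3) * \<sigma> powr (4/3) \<le> C\<^sup>2"
    using n by (intro rate_le_sq_if_large[OF \<sigma>]) auto
  then have "real n powr (1/3) * C powr (2/3) * \<sigma> powr (4/3) / 32 \<le> 3 * C\<^sup>2 / 8"
    using zero_le_power2[of C] by linarith
  moreover have "U \<ge> 0"
    using \<sigma> \<sigma>U by simp
  ultimately show ?thesis
    using SUP_risk_ge_C[OF \<sigma> x n] C by (meson ennreal_leI order_trans less_imp_le)
next
  case False
  then show ?thesis
    using SUP_risk_ge_block_rate[OF \<sigma> C \<sigma>U _ x] by simp
qed

lemma sigma_sq_ln_le_rate: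
  fixes \<sigma> C :: real and n :: nat
  assumes \<sigma>: "\<sigma> > 0" and \<sigma>C: "\<sigma> \<le> C" and n: "n \<ge> 1"
  shows "\<sigma>\<^sup>2 * ln (real n) \<le> 3 * (real n powr (1/3) * C powr (2/3) * \<sigma> powr (4/3))"
proof -
  have "ln (real n) = 3 * ln (real n powr (1/3))"
    using n by (simp add: ln_powr)
  also have "\<dots> \<le> 3 * real n powr (1/3)"
    using n ln_le_minus_one[of "real n powr (1/3)"] by simp
  finally have ln: "ln (real n) \<le> 3 * real n powr (1/3)" .
  have "\<sigma>\<^sup>2 = \<sigma> powr (2/3) * \<sigma> powr (4/3)"
    using \<sigma> by (simp add: powr_add[symmetric] powr_numeral)
  also have "\<dots> \<le> C powr (2/3) * \<sigma> powr (4/3)"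
    using \<sigma> \<sigma>C by (intro mult_right_mono powr_mono2) auto
  finally have "\<sigma>\<^sup>2 * ln (real n) \<le> (C powr (2/3) * \<sigma> powr (4/3)) * (3 * real n powr (1/3))"
    using ln n by (intro mult_mono) auto
  then show ?thesis
    by (simp add: mult_ac)
qed

lemma SUP_risk_ge_minimax_rate:
  assumes \<sigma>: "\<sigma> > 0" and \<sigma>U: "\<sigma> \<le> U" and \<sigma>C: "\<sigma> \<le> C" and n: "n \<ge> 2" and x: "forecaster n x"
  shows "ennreal (1/134 * (U\<^sup>2 + C\<^sup>2 + \<sigma>\<^sup>2 * ln (real n) + real n powr (1/3) * C powr (2/3) * \<sigma> powr (4/3)))
       \<le> (SUP \<theta>\<in>params n C U. risk n \<sigma> x \<theta>)"
proof -
  have U: "U \<ge> 0" and C: "C > 0"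
    using \<sigma> \<sigma>U \<sigma>C by linarith+
  define T where "T = real n powr (1/3) * C powr (2/3) * \<sigma> powr (4/3)"
  define m where "m = max (3 * U\<^sup>2 / 8) (max (3 * C\<^sup>2 / 8) (T / 32))"
  have "\<sigma>\<^sup>2 * ln (real n) \<le> 3 * T"
    unfolding T_def using sigma_sq_ln_le_rate[OF \<sigma> \<sigma>C] n by simp
  moreover have "U\<^sup>2 \<le> 8/3 * m" "C\<^sup>2 \<le> 8/3 * m" "T \<le> 32 * m" "0 \<le> m"
    unfolding m_def by (auto simp: le_max_iff_disj)
  ultimately have "U\<^sup>2 + C\<^sup>2 + \<sigma>\<^sup>2 * ln (real n) + T \<le> 134 * m"
    by linarith
  then have "ennreal (1/134 * (U\<^sup>2 + C\<^sup>2 + \<sigma>\<^sup>2 * ln (real n) + T)) \<le> ennreal m"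
    by (intro ennreal_leI) simp
  also have "\<dots> \<le> (SUP \<theta>\<in>params n C U. risk n \<sigma> x \<theta>)"
  proof -
    have "ennreal (3 * U\<^sup>2 / 8) \<le> (SUP \<theta>\<in>params n C U. risk n \<sigma> x \<theta>)"
      using SUP_risk_ge_U[OF \<sigma> x _ _ U] n C by simp
    moreover have "ennreal (3 * C\<^sup>2 / 8) \<le> (SUP \<theta>\<in>params n C U. risk n \<sigma> x \<theta>)"
      using SUP_risk_ge_C[OF \<sigma> x n _ U] C by simp
    moreover have "ennreal (T / 32) \<le> (SUP \<theta>\<in>params n C U. risk n \<sigma> x \<theta>)"
      unfolding T_def using SUP_risk_ge_rate[OF \<sigma> C \<sigma>U n x] by simp
    moreover have "m = 3 * U\<^sup>2 / 8 \<or> m = 3 * C\<^sup>2 / 8 \<or> m = T / 32"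
      unfolding m_def by linarith
    ultimately show ?thesis
      by (elim disjE) (simp_all only:)
  qed
  finally show ?thesis
    unfolding T_def .
qed

theorem proposition2:
  "\<exists>c::real. c > 0 \<and>
    (\<forall>(n::nat) (\<sigma>::real) (U::real) (C::real).
      n > 3 \<longrightarrow> \<sigma> > 0 \<longrightarrow> U > 0 \<longrightarrow> C > 0 \<longrightarrow> min U C > 2 * pi * \<sigma> \<longrightarrow>
      (INF x\<in>{x. forecaster n x}. SUP \<theta>\<in>{\<theta>. \<theta> \<in> TV_class n C \<and> \<bar>\<theta> 1\<bar> \<le> U}. risk n \<sigma> x \<theta>)
        \<ge> ennreal (c * (U\<^sup>2 + C\<^sup>2 + \<sigma>\<^sup>2 * ln (real n)
              + real n powr (1/3) * C powr (2/3) * \<sigma> powr (4/3))))"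
proof (intro exI[of _ "1/134"] conjI allI impI)
  fix n :: nat and \<sigma> U C :: real
  assume n: "n > 3" and \<sigma>: "\<sigma> > 0" and "U > 0" "C > 0" and UC: "min U C > 2 * pi * \<sigma>"
  have "\<sigma> < 2 * pi * \<sigma>" using pi_gt3 \<sigma> by simp
  then have \<sigma>U: "\<sigma> \<le> U" and \<sigma>C: "\<sigma> \<le> C" using UC by auto
  show "ennreal (1/134 * (U\<^sup>2 + C\<^sup>2 + \<sigma>\<^sup>2 * ln (real n) + real n powr (1/3) * C powr (2/3) * \<sigma> powr (4/3)))
      \<le> (INF x\<in>{x. forecaster n x}. SUP \<theta>\<in>params n C U. risk n \<sigma> x \<theta>)"
  proof (rule INF_greatest)
    fix x assume "x \<in> {x. forecaster n x}"
    then show "ennreal (1/134 * (U\<^sup>2 + C\<^sup>2 + \<sigma>\<^sup>2 * ln (real n) + real n powr (1/3) * C powr (2/3) * \<sigma> powr (4/3)))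
        \<le> (SUP \<theta>\<in>params n C U. risk n \<sigma> x \<theta>)"
      using n by (intro SUP_risk_ge_minimax_rate[OF \<sigma> \<sigma>U \<sigma>C]) auto
  qed
qed simp

end
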